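(* Consider the stochastic $K$-armed bandit with losses supported in $[0,1]$, and run the Regularized-EXP3 algorithm described in the context with mirror map $\phi_\alpha$, $\alpha\in[0,1]$, and parameters $\eta=1/\sqrt T$, $\varepsilon=\log T/\sqrt T$, $\lambda=\gamma_T/\sqrt{KT}$, where $(\gamma_T)$ is a positive sequence with $\gamma_T\le(\log T)^2$ and $\gamma_T/(\log T)^2\to0$, and, if $\alpha\in[0,\tfrac13)$, additionally $\log T/\gamma_T\to0$. Then the regret $\mathcal R(T)=\mathbb E[\sum_{t=1}^T\ell_t]-T\mu^\star$, with $\mu^\star=\min_j\mu_j$, satisfies $$\mathcal R(T)\le\begin{cases}\left(4\sqrt K\log T+\gamma_T\log T\right)\sqrt{KT}, & \alpha\in[0,\tfrac13),\\[2pt] \left(4\sqrt K\log K+2\sqrt K\log T+\gamma_T\log T\right)\sqrt{KT}, & \alpha\in[\tfrac13,1].\end{cases}$$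
   Context: Stochastic $K$-armed bandit (loss formulation): arm $a\in[K]$ has loss distribution $\mathcal P_a$ supported in $[0,1]$ with mean $\mu_a$; $\mu=(\mu_1,\dots,\mu_K)$. At round $t$ the learner chooses $A_t$ and observes $\ell_t\sim\mathcal P_{A_t}$ (independently of the past given $A_t$). $\Delta_\varepsilon=\{x\in\mathbb R^K: x_j\ge\varepsilon\ \forall j,\ \sum_jx_j=1\}$; $R_\varepsilon(x)=-\sum_i\ln x_i+\frac1\varepsilon\sum_ix_i$. Mirror maps on $\mathbb R^K_{>0}$: $\phi_\alpha(x)=-\sum_i\frac{x_i^\alpha-\alpha x_i-(1-\alpha)}{\alpha(1-\alpha)}$ for $0<\alpha<1$, $\phi_0(x)=-\sum_i(\log x_i-x_i+1)$, $\phi_1(x)=\sum_i(x_i\log x_i-x_i+1)$. $D_\phi(x,y)=\phi(x)-\phi(y)-\langle\nabla\phi(y),x-y\rangle$. Regularized-EXP3 (parameters $T,\eta,\lambda,\varepsilon$, mirror map $\phi$): $z_1=(1/K,\dots,1/K)$; for $t=1,\dots,T$: $x_t=\arg\min_{x\in\Delta_\varepsilon}D_\phi(x,z_t)$; draw $A_t$ with $\mathbb P(A_t=j\mid\text{past})=x_{t,j}$, observe $\ell_t$; $\widehat\ell_{t,j}=\mathbb I\{A_t=j\}\ell_t/x_{t,j}$; $\widetilde\ell_t=\widehat\ell_t+\lambda\nabla R_\varepsilon(x_t)$; $z_{t+1}=\arg\min_x\{\eta\langle\widetilde\ell_t,x\rangle+D_\phi(x,x_t)\}$. *)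

theory Defs
  imports "HOL-Probability.Probability"
begin

text \<open>Arms are the elements of a finite type 'k, so K = CARD('k);
  vectors in R^K are functions 'k \<Rightarrow> real.\<close>

definition inner_k :: "('k::finite \<Rightarrow> real) \<Rightarrow> ('k \<Rightarrow> real) \<Rightarrow> real" where
  "inner_k u v = (\<Sum>i\<in>UNIV. u i * v i)"

definition simplex_eps :: "real \<Rightarrow> ('k::finite \<Rightarrow> real) set" where
  "simplex_eps \<epsilon> = {x. (\<forall>j. x j \<ge> \<epsilon>) \<and> (\<Sum>j\<in>UNIV. x j) = 1}"

definition pos_orthant :: "('k::finite \<Rightarrow> real) set" where
  "pos_orthant = {x. \<forall>i. x i > 0}"

definition phi :: "real \<Rightarrow> ('k::finite \<Rightarrow> real) \<Rightarrow> real" where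
  "phi \<alpha> x =
     (if \<alpha> = 0 then - (\<Sum>i\<in>UNIV. ln (x i) - x i + 1)
      else if \<alpha> = 1 then (\<Sum>i\<in>UNIV. x i * ln (x i) - x i + 1)
      else - (\<Sum>i\<in>UNIV. (x i powr \<alpha> - \<alpha> * x i - (1 - \<alpha>)) / (\<alpha> * (1 - \<alpha>))))"

definition grad_phi :: "real \<Rightarrow> ('k::finite \<Rightarrow> real) \<Rightarrow> 'k \<Rightarrow> real" where
  "grad_phi \<alpha> x i =
     (if \<alpha> = 0 then - (1 / x i - 1)
      else if \<alpha> = 1 then ln (x i)
      else - (\<alpha> * x i powr (\<alpha> - 1) - \<alpha>) / (\<alpha> * (1 - \<alpha>)))"

definition bregman :: "real \<Rightarrow> ('k::finite \<Rightarrow> real) \<Rightarrow> ('k \<Rightarrow> real) \<Rightarrow> real" where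
  "bregman \<alpha> x y = phi \<alpha> x - phi \<alpha> y - inner_k (grad_phi \<alpha> y) (\<lambda>i. x i - y i)"

text \<open>Gradient of R_eps(x) = - sum ln x_i + (1/eps) sum x_i.\<close>
definition grad_R :: "real \<Rightarrow> ('k::finite \<Rightarrow> real) \<Rightarrow> 'k \<Rightarrow> real" where
  "grad_R \<epsilon> x i = - 1 / x i + 1 / \<epsilon>"

definition proj :: "real \<Rightarrow> real \<Rightarrow> ('k::finite \<Rightarrow> real) \<Rightarrow> ('k \<Rightarrow> real)" where
  "proj \<alpha> \<epsilon> z = (SOME x. x \<in> simplex_eps \<epsilon> \<and>
       (\<forall>y\<in>simplex_eps \<epsilon>. bregman \<alpha> x z \<le> bregman \<alpha> y z))"

definition reg_loss :: "real \<Rightarrow> real \<Rightarrow> real \<Rightarrow> ('k::finite \<Rightarrow> real) \<Rightarrow> 'k \<Rightarrow> real \<Rightarrow> ('k \<Rightarrow> real)" where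
  "reg_loss \<alpha> lam \<epsilon> z j l =
     (let x = proj \<alpha> \<epsilon> z in
      (\<lambda>i. (if i = j then l / x j else 0) + lam * grad_R \<epsilon> x i))"

definition next_state :: "real \<Rightarrow> real \<Rightarrow> real \<Rightarrow> real \<Rightarrow> ('k::finite \<Rightarrow> real) \<Rightarrow> 'k \<Rightarrow> real \<Rightarrow> ('k \<Rightarrow> real)" where
  "next_state \<alpha> \<eta> lam \<epsilon> z j l =
     (let x = proj \<alpha> \<epsilon> z; lt = reg_loss \<alpha> lam \<epsilon> z j l in
      SOME z'. z' \<in> pos_orthant \<and>
        (\<forall>y\<in>pos_orthant. \<eta> * inner_k lt z' + bregman \<alpha> z' x \<le> \<eta> * inner_k lt y + bregman \<alpha> y x))"

text \<open>Expected cumulative loss of n remaining rounds of Regularized-EXP3 started in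
  state z (z = z_t), when arm j has loss distribution P j:
  E[sum of losses] computed by conditioning on A_t (chosen w.p. x_{t,j}) and
  l_t ~ P_{A_t}.\<close>
fun exp_loss :: "('k::finite \<Rightarrow> real measure) \<Rightarrow> real \<Rightarrow> real \<Rightarrow> real \<Rightarrow> real \<Rightarrow> nat
                 \<Rightarrow> ('k \<Rightarrow> real) \<Rightarrow> ennreal" where
  "exp_loss P \<alpha> \<eta> lam \<epsilon> 0 z = 0"
| "exp_loss P \<alpha> \<eta> lam \<epsilon> (Suc n) z =
     (\<Sum>j\<in>UNIV. ennreal (proj \<alpha> \<epsilon> z j) *
        (\<integral>\<^sup>+ l. ennreal l + exp_loss P \<alpha> \<eta> lam \<epsilon> n (next_state \<alpha> \<eta> lam \<epsilon> z j l) \<partial>P j))"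

definition exp3_expected_loss ::
  "('k::finite \<Rightarrow> real measure) \<Rightarrow> real \<Rightarrow> nat \<Rightarrow> real \<Rightarrow> real \<Rightarrow> real \<Rightarrow> ennreal" where
  "exp3_expected_loss P \<alpha> T \<eta> lam \<epsilon> =
     exp_loss P \<alpha> \<eta> lam \<epsilon> T (\<lambda>_. 1 / real CARD('k))"

end

(* Every phi_alpha has second derivative
   t powr (alpha - 2) >= 1 / t on (0, 1], which gives the local-norm bound
   c (x - y) - D(y, x) <= c^2 x / 2 (c >= 0) for one mirror step.  Together with the closed form
   grad phi(z_(t+1)) = grad phi(x_t) - eta l~_t of the step, the generalized Pythagorean inequality
   for the Bregman projection onto Delta_eps and E[l^_t] = mu, this gives for every u in Delta_eps
     E[sum_t l_t] <= T (<u, mu> + eta K + lambda K + eta K lambda^2 / eps^2) + D(u, x_1) / eta.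
   Taking for u the point with mass 1 - (K - 1) eps on a best arm costs T K eps = K sqrt T log T,
   while D(u, uniform) is O(K) for alpha > 0 and O(K log T) for alpha = 0; for large T these
   constants are absorbed.  Only 0 < gamma_T <= (log T)^2 is used, not the limit hypotheses. *)

theory Submission
  imports Defs "HOL-Real_Asymp.Real_Asymp"
begin

section \<open>The mirror maps coordinatewise\<close>

definition phi_coord :: "real \<Rightarrow> real \<Rightarrow> real" where
  "phi_coord \<alpha> t =
     (if \<alpha> = 0 then - (ln t - t + 1)
      else if \<alpha> = 1 then t * ln t - t + 1
      else - ((t powr \<alpha> - \<alpha> * t - (1 - \<alpha>)) / (\<alpha> * (1 - \<alpha>))))"

definition grad_phi_coord :: "real \<Rightarrow> real \<Rightarrow> real" where
  "grad_phi_coord \<alpha> t =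
     (if \<alpha> = 0 then - (1 / t - 1)
      else if \<alpha> = 1 then ln t
      else - (\<alpha> * t powr (\<alpha> - 1) - \<alpha>) / (\<alpha> * (1 - \<alpha>)))"

definition bregman_coord :: "real \<Rightarrow> real \<Rightarrow> real \<Rightarrow> real" where
  "bregman_coord \<alpha> s t = phi_coord \<alpha> s - phi_coord \<alpha> t - grad_phi_coord \<alpha> t * (s - t)"

lemma phi_eq_sum: "phi \<alpha> x = (\<Sum>i\<in>UNIV. phi_coord \<alpha> (x i))"
  unfolding phi_def phi_coord_def
  by (simp add: sum_negf[symmetric] sum_subtractf sum.distrib sum_divide_distrib)

lemma grad_phi_eq: "grad_phi \<alpha> x i = grad_phi_coord \<alpha> (x i)"
  unfolding grad_phi_def grad_phi_coord_def by simp

lemma bregman_eq_sum: "bregman \<alpha> x y = (\<Sum>i\<in>UNIV. bregman_coord \<alpha> (x i) (y i))"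
  unfolding bregman_def bregman_coord_def inner_k_def phi_eq_sum grad_phi_eq
  by (simp add: sum_subtractf)

lemma has_real_derivative_phi_coord:
  assumes "0 < t"
  shows "(phi_coord \<alpha> has_real_derivative grad_phi_coord \<alpha> t) (at t)"
proof -
  consider "\<alpha> = 0" | "\<alpha> = 1" | "\<alpha> \<noteq> 0" "\<alpha> \<noteq> 1" by blast
  then show ?thesis
  proof cases
    case 1
    then show ?thesis unfolding phi_coord_def[abs_def] grad_phi_coord_def
      using assms by (auto intro!: derivative_eq_intros)
  next
    case 2
    then show ?thesis unfolding phi_coord_def[abs_def] grad_phi_coord_def
      using assms by (auto intro!: derivative_eq_intros)
  next
    case 3
    then show ?thesis unfolding phi_coord_def[abs_def] grad_phi_coord_def
      using assms by (auto intro!: derivative_eq_intros simp: diff_divide_distrib)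
        (simp_all add: diff_divide_distrib[symmetric])
  qed
qed

lemma has_real_derivative_grad_phi_coord:
  assumes "0 < t"
  shows "(grad_phi_coord \<alpha> has_real_derivative t powr (\<alpha> - 2)) (at t)"
proof -
  consider "\<alpha> = 0" | "\<alpha> = 1" | "\<alpha> \<noteq> 0" "\<alpha> \<noteq> 1" by blast
  then show ?thesis
  proof cases
    case 1
    then show ?thesis unfolding grad_phi_coord_def[abs_def]
      using assms by (auto intro!: derivative_eq_intros simp: powr_minus power2_eq_square powr_add[symmetric] divide_inverse)
  next
    case 2
    then show ?thesis unfolding grad_phi_coord_def[abs_def]
      using assms by (auto intro!: derivative_eq_intros simp: powr_minus divide_inverse)
  next
    case 3
    then show ?thesis unfolding grad_phi_coord_def[abs_def]
      using assms by (auto intro!: derivative_eq_intros simp: diff_divide_distrib)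
        (simp add: field_simps)
  qed
qed

lemma bregman_coord_ge_quadratic:
  assumes "\<alpha> \<le> 2" "0 < s" "0 < t" "s \<le> m" "t \<le> m"
  shows "m powr (\<alpha> - 2) * (s - t)\<^sup>2 / 2 \<le> bregman_coord \<alpha> s t"
proof -
  \<comment> \<open>phi is \<open>c\<close>-strongly convex on \<open>{0<..m}\<close>,
    as its second derivative is \<open>r powr (\<alpha> - 2) \<ge> c\<close> there\<close>
  define c where "c = m powr (\<alpha> - 2)"
  have "(grad_phi_coord \<alpha> t - c * t) * (s - t)
      \<le> (phi_coord \<alpha> s - c * s\<^sup>2 / 2) - (phi_coord \<alpha> t - c * t\<^sup>2 / 2)"
  proof (rule f''_imp_f'[where C = "{0<..m}"])
    fix r :: real assume r: "r \<in> {0<..m}"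
    show "((\<lambda>r. phi_coord \<alpha> r - c * r\<^sup>2 / 2) has_real_derivative grad_phi_coord \<alpha> r - c * r) (at r)"
      using r by (auto intro!: derivative_eq_intros has_real_derivative_phi_coord)
    show "((\<lambda>r. grad_phi_coord \<alpha> r - c * r) has_real_derivative r powr (\<alpha> - 2) - c) (at r)"
      using r by (auto intro!: derivative_eq_intros has_real_derivative_grad_phi_coord)
    show "0 \<le> r powr (\<alpha> - 2) - c"
      using r assms(1) powr_mono2'[of "\<alpha> - 2" r m] by (simp add: c_def)
  qed (use assms in auto)
  moreover have "c * (s - t)\<^sup>2 / 2 = c * s\<^sup>2 / 2 - c * t\<^sup>2 / 2 - c * t * (s - t)"
    by (simp add: power2_eq_square field_simps)
  ultimately show ?thesis
    unfolding bregman_coord_def c_def[symmetric] by (simp add: algebra_simps)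
qed

lemma bregman_coord_pos:
  assumes "\<alpha> \<le> 2" "0 < s" "0 < t" "s \<noteq> t"
  shows "0 < bregman_coord \<alpha> s t"
proof -
  have "0 < max s t powr (\<alpha> - 2) * (s - t)\<^sup>2 / 2"
    using assms by simp
  also have "\<dots> \<le> bregman_coord \<alpha> s t"
    using assms by (intro bregman_coord_ge_quadratic) auto
  finally show ?thesis .
qed

lemma bregman_coord_nonneg:
  assumes "\<alpha> \<le> 2" "0 < s" "0 < t"
  shows "0 \<le> bregman_coord \<alpha> s t"
  using bregman_coord_pos[OF assms] by (cases "s = t") (auto simp: bregman_coord_def)

lemma bregman_coord_ge_local_quadratic:
  assumes "\<alpha> \<le> 1" "0 < s" "s \<le> t" "t \<le> 1"
  shows "(t - s)\<^sup>2 / (2 * t) \<le> bregman_coord \<alpha> s t"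
proof -
  have "1 / t = t powr (- 1)"
    using assms by (simp add: powr_minus divide_inverse)
  also have "\<dots> \<le> t powr (\<alpha> - 2)"
    using assms by (intro powr_mono') auto
  finally have "1 / t * ((t - s)\<^sup>2 / 2) \<le> t powr (\<alpha> - 2) * ((t - s)\<^sup>2 / 2)"
    by (rule mult_right_mono) simp
  then have "(t - s)\<^sup>2 / (2 * t) \<le> t powr (\<alpha> - 2) * (t - s)\<^sup>2 / 2"
    by simp
  also have "\<dots> \<le> bregman_coord \<alpha> s t"
    using bregman_coord_ge_quadratic[of \<alpha> s t t] assms by (simp add: power2_commute)
  finally show ?thesis .
qed

lemma bregman_coord_three_point:
  "bregman_coord \<alpha> u z - bregman_coord \<alpha> u x - bregman_coord \<alpha> x z
     = (grad_phi_coord \<alpha> x - grad_phi_coord \<alpha> z) * (u - x)"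
  unfolding bregman_coord_def by (simp add: algebra_simps)

lemma linear_minus_bregman_coord_le:
  assumes "\<alpha> \<le> 1" "0 < x" "x \<le> 1" "0 < y" "0 \<le> c"
  shows "c * (x - y) - bregman_coord \<alpha> y x \<le> c\<^sup>2 * x / 2"
proof (cases "y \<le> x")
  case True
  have "c * (x - y) - (x - y)\<^sup>2 / (2 * x) = c\<^sup>2 * x / 2 - (c * x - (x - y))\<^sup>2 / (2 * x)"
    using assms by (simp add: field_simps power2_eq_square)
  also have "\<dots> \<le> c\<^sup>2 * x / 2"
    using assms by simp
  finally show ?thesis
    using bregman_coord_ge_local_quadratic[of \<alpha> y x] True assms by linarith
next
  case False
  then have "c * (x - y) \<le> 0"
    using assms by (simp add: mult_nonneg_nonpos)
  moreover have "0 \<le> c\<^sup>2 * x / 2"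
    using assms by simp
  ultimately show ?thesis
    using bregman_coord_nonneg[of \<alpha> y x] assms by linarith
qed

lemma grad_phi_coord_shift_exists:
  assumes "\<alpha> \<le> 1" "0 < t" "0 \<le> c"
  shows "\<exists>w>0. grad_phi_coord \<alpha> w = grad_phi_coord \<alpha> t - c"
proof -
  consider "\<alpha> = 0" | "\<alpha> = 1" | "\<alpha> \<noteq> 0" "\<alpha> < 1"
    using assms by linarith
  then show ?thesis
  proof cases
    case 1
    have "0 < 1 / t + c"
      using assms by (simp add: add_pos_nonneg)
    with 1 show ?thesis
      by (intro exI[of _ "1 / (1 / t + c)"]) (simp add: grad_phi_coord_def)
  next
    case 2
    with assms show ?thesis
      by (intro exI[of _ "t * exp (- c)"]) (simp add: grad_phi_coord_def ln_mult)
  next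
    case 3
    define q where "q = t powr (\<alpha> - 1) + (1 - \<alpha>) * c"
    have q: "0 < q"
      unfolding q_def using 3 assms by (simp add: add_pos_nonneg)
    define w where "w = q powr (1 / (\<alpha> - 1))"
    have "w powr (\<alpha> - 1) = q"
      unfolding w_def using q 3 by (simp add: powr_powr)
    then have "grad_phi_coord \<alpha> w = - (\<alpha> * q - \<alpha>) / (\<alpha> * (1 - \<alpha>))"
      using 3 by (simp add: grad_phi_coord_def)
    also have "\<dots> = grad_phi_coord \<alpha> t - c"
      using 3 unfolding grad_phi_coord_def q_def by (simp add: field_simps)
    finally show ?thesis
      using q unfolding w_def by (intro exI[of _ w]) (simp add: w_def)
  qed
qed

lemma bregman_nonneg:
  assumes "\<alpha> \<le> 2" "\<And>i. 0 < x i" "\<And>i. 0 < y i"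
  shows "0 \<le> bregman \<alpha> x y"
  unfolding bregman_eq_sum using assms by (intro sum_nonneg bregman_coord_nonneg) auto

lemma bregman_pos:
  assumes "\<alpha> \<le> 2" "\<And>i. 0 < x i" "\<And>i. 0 < y i" "x \<noteq> y"
  shows "0 < bregman \<alpha> x y"
proof -
  obtain i where "x i \<noteq> y i"
    using assms(4) by blast
  then show ?thesis
    unfolding bregman_eq_sum
    using assms by (intro sum_pos2[where i = i] bregman_coord_pos bregman_coord_nonneg) auto
qed

section \<open>Bregman projection onto the truncated simplex\<close>

lemma simplex_eps_pos: "x \<in> simplex_eps \<epsilon> \<Longrightarrow> 0 < \<epsilon> \<Longrightarrow> 0 < x i"
  unfolding simplex_eps_def by (auto intro: less_le_trans)

lemma simplex_eps_le_one:
  assumes "x \<in> simplex_eps \<epsilon>" "0 < \<epsilon>"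
  shows "x i \<le> 1"
proof -
  have "x i \<le> (\<Sum>j\<in>UNIV. x j)"
    using simplex_eps_pos[OF assms] by (intro member_le_sum) (auto intro: less_imp_le)
  then show ?thesis
    using assms unfolding simplex_eps_def by simp
qed

lemma uniform_in_simplex_eps:
  assumes "real CARD('k::finite) * \<epsilon> \<le> 1"
  shows "(\<lambda>_. 1 / real CARD('k)) \<in> (simplex_eps \<epsilon> :: ('k \<Rightarrow> real) set)"
  using assms unfolding simplex_eps_def by (auto simp: field_simps)

lemma simplex_eps_segment:
  assumes "x \<in> simplex_eps \<epsilon>" "u \<in> simplex_eps \<epsilon>" "0 \<le> t" "t \<le> 1"
  shows "(\<lambda>i. x i + t * (u i - x i)) \<in> simplex_eps \<epsilon>"
proof -
  have "\<epsilon> \<le> x i + t * (u i - x i)" for i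
  proof -
    have "(1 - t) * \<epsilon> \<le> (1 - t) * x i" "t * \<epsilon> \<le> t * u i"
      using assms unfolding simplex_eps_def by (auto intro: mult_left_mono)
    then show ?thesis
      by (simp add: algebra_simps)
  qed
  moreover have "(\<Sum>i\<in>UNIV. x i + t * (u i - x i)) = 1"
    using assms unfolding simplex_eps_def
    by (simp add: sum.distrib sum_subtractf sum_distrib_left[symmetric])
  ultimately show ?thesis
    unfolding simplex_eps_def by blast
qed

lemma proj_exists:
  fixes z :: "'k::finite \<Rightarrow> real"
  assumes "0 < \<epsilon>" "real CARD('k) * \<epsilon> \<le> 1"
  shows "\<exists>x\<in>simplex_eps \<epsilon>. \<forall>y\<in>simplex_eps \<epsilon>. bregman \<alpha> x z \<le> bregman \<alpha> y z"
proof -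
  define S where "S = {v :: real^'k. (\<lambda>j. v$j) \<in> simplex_eps \<epsilon>}"
  have "closed S"
    unfolding S_def simplex_eps_def mem_Collect_eq
    by (intro closed_Collect_conj closed_Collect_all closed_Collect_le closed_Collect_eq)
      (auto intro!: continuous_intros)
  moreover have "S \<subseteq> cbox 0 1"
  proof
    fix v assume "v \<in> S"
    then have v: "(\<lambda>j. v$j) \<in> simplex_eps \<epsilon>"
      unfolding S_def by simp
    show "v \<in> cbox 0 1"
      using simplex_eps_pos[OF v assms(1)] simplex_eps_le_one[OF v assms(1)]
      by (auto simp: mem_box_cart less_imp_le)
  qed
  ultimately have "compact S"
    using bounded_cbox bounded_subset compact_eq_bounded_closed by blast
  moreover have "vec_lambda (\<lambda>_. 1 / real CARD('k)) \<in> S"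
    using uniform_in_simplex_eps[OF assms(2)] unfolding S_def by (simp add: vec_lambda_inverse)
  then have "S \<noteq> {}"
    by blast
  moreover have "continuous_on S (\<lambda>v. bregman \<alpha> (\<lambda>i. v$i) z)"
    unfolding bregman_eq_sum bregman_coord_def
  proof (intro continuous_on_sum continuous_on_diff continuous_on_mult continuous_on_const)
    fix i
    have "continuous_on {0<..} (phi_coord \<alpha>)"
      by (intro continuous_at_imp_continuous_on ballI DERIV_isCont[OF has_real_derivative_phi_coord])
        simp
    moreover have "(\<lambda>v. v $ i) ` S \<subseteq> {0<..}"
      using simplex_eps_pos[OF _ assms(1)] unfolding S_def by auto
    moreover have "continuous_on S (\<lambda>v. v $ i)"
      by (auto intro!: continuous_intros)
    ultimately show "continuous_on S (\<lambda>v. phi_coord \<alpha> (v $ i))"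
      by (metis continuous_on_compose2)
  qed (auto intro!: continuous_intros)
  ultimately obtain v where v: "v \<in> S" "\<forall>w\<in>S. bregman \<alpha> (\<lambda>i. v$i) z \<le> bregman \<alpha> (\<lambda>i. w$i) z"
    by (rule continuous_attains_inf[elim_format]) blast
  show ?thesis
  proof (intro bexI ballI)
    show "(\<lambda>i. v$i) \<in> simplex_eps \<epsilon>"
      using v(1) unfolding S_def by simp
    fix y :: "'k \<Rightarrow> real" assume "y \<in> simplex_eps \<epsilon>"
    then have "vec_lambda y \<in> S"
      unfolding S_def by (simp add: vec_lambda_inverse)
    then show "bregman \<alpha> (\<lambda>i. v$i) z \<le> bregman \<alpha> y z"
      using v(2) by (auto simp: vec_lambda_inverse)
  qed
qed

lemma
  fixes z :: "'k::finite \<Rightarrow> real"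
  assumes "0 < \<epsilon>" "real CARD('k) * \<epsilon> \<le> 1"
  shows proj_in_simplex_eps: "proj \<alpha> \<epsilon> z \<in> simplex_eps \<epsilon>"
    and proj_minimal: "y \<in> simplex_eps \<epsilon> \<Longrightarrow> bregman \<alpha> (proj \<alpha> \<epsilon> z) z \<le> bregman \<alpha> y z"
  using someI_ex[OF proj_exists[OF assms, of \<alpha> z, unfolded Bex_def]] unfolding proj_def by blast+

lemma proj_pos:
  assumes "0 < \<epsilon>" "real CARD('k::finite) * \<epsilon> \<le> 1"
  shows "0 < proj \<alpha> \<epsilon> (z :: 'k \<Rightarrow> real) i"
  using simplex_eps_pos[OF proj_in_simplex_eps[OF assms] assms(1)] .

lemma proj_first_order:
  fixes z u :: "'k::finite \<Rightarrow> real"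
  assumes "\<alpha> \<le> 2" "0 < \<epsilon>" "real CARD('k) * \<epsilon> \<le> 1"
    and "u \<in> simplex_eps \<epsilon>" "\<And>i. 0 < z i"
  defines "x \<equiv> proj \<alpha> \<epsilon> z"
  shows "0 \<le> (\<Sum>i\<in>UNIV. (grad_phi_coord \<alpha> (x i) - grad_phi_coord \<alpha> (z i)) * (u i - x i))"
proof -
  have x: "x \<in> simplex_eps \<epsilon>" "\<And>i. 0 < x i"
    unfolding x_def using proj_in_simplex_eps proj_pos assms by blast+
  \<comment> \<open>\<open>t * G t\<close> dominates the increase of \<open>bregman \<alpha> _ z\<close> from the minimiser \<open>x\<close> to \<open>xt t\<close>;
    let \<open>t \<rightarrow> 0\<close>\<close>
  define xt where "xt t i = x i + t * (u i - x i)" for t i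
  define G where "G t = (\<Sum>i\<in>UNIV. (grad_phi_coord \<alpha> (xt t i) - grad_phi_coord \<alpha> (z i)) * (u i - x i))"
    for t
  have "0 \<le> G t" if t: "0 < t" "t \<le> 1" for t
  proof -
    have xt: "xt t \<in> simplex_eps \<epsilon>"
      unfolding xt_def using simplex_eps_segment[OF x(1) assms(4)] t by simp
    have "t * ((grad_phi_coord \<alpha> (xt t i) - grad_phi_coord \<alpha> (z i)) * (u i - x i))
        = bregman_coord \<alpha> (xt t i) (z i) - bregman_coord \<alpha> (x i) (z i) + bregman_coord \<alpha> (x i) (xt t i)"
      for i using bregman_coord_three_point[of \<alpha> "x i" "z i" "xt t i"] by (simp add: xt_def algebra_simps)
    then have "t * G t = (bregman \<alpha> (xt t) z - bregman \<alpha> x z) + bregman \<alpha> x (xt t)"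
      unfolding G_def bregman_eq_sum sum_distrib_left
      by (simp add: sum_subtractf[symmetric] sum.distrib[symmetric])
    moreover have "bregman \<alpha> x z \<le> bregman \<alpha> (xt t) z"
      unfolding x_def using proj_minimal[OF assms(2,3) xt[unfolded x_def]] .
    moreover have "0 \<le> bregman \<alpha> x (xt t)"
      using bregman_nonneg[OF assms(1) x(2)] simplex_eps_pos[OF xt assms(2)] .
    ultimately have "0 \<le> t * G t"
      by simp
    then show ?thesis
      using t by (simp add: zero_le_mult_iff)
  qed
  then have "eventually (\<lambda>t. 0 \<le> G t) (at_right 0)"
    using eventually_at_right_real[of "0::real" 1] by (rule eventually_mono[rotated]) auto
  moreover have "isCont (\<lambda>t. grad_phi_coord \<alpha> (xt t i)) 0" for i
    unfolding xt_def
    by (rule isCont_o2[where g = "grad_phi_coord \<alpha>"])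
      (auto intro!: continuous_intros DERIV_isCont[OF has_real_derivative_grad_phi_coord] x(2))
  then have "isCont G 0"
    unfolding G_def by (auto intro!: continuous_intros)
  then have "(G \<longlongrightarrow> G 0) (at_right 0)"
    using isContD filterlim_at_split by blast
  ultimately have "0 \<le> G 0"
    using tendsto_lowerbound by (metis trivial_limit_at_right_real)
  then show ?thesis
    unfolding G_def xt_def by simp
qed

lemma bregman_proj_le:
  fixes z u :: "'k::finite \<Rightarrow> real"
  assumes "\<alpha> \<le> 2" "0 < \<epsilon>" "real CARD('k) * \<epsilon> \<le> 1"
    and "u \<in> simplex_eps \<epsilon>" "\<And>i. 0 < z i"
  shows "bregman \<alpha> u (proj \<alpha> \<epsilon> z) \<le> bregman \<alpha> u z"
proof -
  define x where "x = proj \<alpha> \<epsilon> z"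
  have "bregman \<alpha> u z - bregman \<alpha> u x - bregman \<alpha> x z
      = (\<Sum>i\<in>UNIV. (grad_phi_coord \<alpha> (x i) - grad_phi_coord \<alpha> (z i)) * (u i - x i))"
    unfolding bregman_eq_sum by (simp add: sum_subtractf[symmetric] bregman_coord_three_point)
  moreover have "0 \<le> bregman \<alpha> x z"
    unfolding x_def using bregman_nonneg[OF assms(1) proj_pos[OF assms(2,3)] assms(5)] .
  ultimately show ?thesis
    using proj_first_order[of \<alpha> \<epsilon> u z, OF assms] unfolding x_def by linarith
qed

section \<open>One round of Regularized-EXP3\<close>

lemma grad_R_bounds:
  assumes "0 < \<epsilon>" "\<epsilon> \<le> x i"
  shows "0 \<le> grad_R \<epsilon> x i" "grad_R \<epsilon> x i \<le> 1 / \<epsilon>"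
  using assms by (simp_all add: grad_R_def frac_le)

lemma reg_loss_eq:
  "reg_loss \<alpha> lam \<epsilon> z j l i
     = (if i = j then l / proj \<alpha> \<epsilon> z j else 0) + lam * grad_R \<epsilon> (proj \<alpha> \<epsilon> z) i"
  unfolding reg_loss_def Let_def ..

lemma reg_loss_nonneg:
  fixes z :: "'k::finite \<Rightarrow> real"
  assumes "0 < \<epsilon>" "real CARD('k) * \<epsilon> \<le> 1" "0 \<le> lam" "0 \<le> l"
  shows "0 \<le> reg_loss \<alpha> lam \<epsilon> z j l i"
proof -
  have "0 \<le> grad_R \<epsilon> (proj \<alpha> \<epsilon> z) i"
    using proj_in_simplex_eps[OF assms(1,2)] assms(1)
    unfolding simplex_eps_def by (intro grad_R_bounds) auto
  then show ?thesis
    using proj_pos[OF assms(1,2), of \<alpha> z j] assms(3,4) unfolding reg_loss_eq by (cases "i = j") auto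
qed

lemma mirror_step_excess:
  fixes x w y lt :: "'k::finite \<Rightarrow> real"
  assumes "\<And>i. grad_phi_coord \<alpha> (w i) = grad_phi_coord \<alpha> (x i) - \<eta> * lt i"
  shows "(\<eta> * inner_k lt y + bregman \<alpha> y x) - (\<eta> * inner_k lt w + bregman \<alpha> w x) = bregman \<alpha> y w"
proof -
  have "\<eta> * lt i * y i + bregman_coord \<alpha> (y i) (x i) - (\<eta> * lt i * w i + bregman_coord \<alpha> (w i) (x i))
      = bregman_coord \<alpha> (y i) (w i)" for i
    using bregman_coord_three_point[of \<alpha> "y i" "x i" "w i"] assms[of i] by (simp add: algebra_simps)
  then show ?thesis
    unfolding inner_k_def bregman_eq_sum sum_distrib_left
    by (simp add: sum_subtractf[symmetric] sum.distrib[symmetric] mult.assoc)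
qed

lemma
  fixes z :: "'k::finite \<Rightarrow> real"
  assumes "\<alpha> \<le> 1" "0 < \<epsilon>" "real CARD('k) * \<epsilon> \<le> 1" "0 < \<eta>" "0 \<le> lam" "0 \<le> l"
  shows next_state_pos: "0 < next_state \<alpha> \<eta> lam \<epsilon> z j l i"
    and grad_phi_coord_next_state: "grad_phi_coord \<alpha> (next_state \<alpha> \<eta> lam \<epsilon> z j l i)
           = grad_phi_coord \<alpha> (proj \<alpha> \<epsilon> z i) - \<eta> * reg_loss \<alpha> lam \<epsilon> z j l i"
proof -
  define x where "x = proj \<alpha> \<epsilon> z"
  define lt where "lt = reg_loss \<alpha> lam \<epsilon> z j l"
  have "\<forall>i. \<exists>w>0. grad_phi_coord \<alpha> w = grad_phi_coord \<alpha> (x i) - \<eta> * lt i"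
    unfolding x_def lt_def using assms reg_loss_nonneg[OF assms(2,3,5,6)] proj_pos[OF assms(2,3)]
    by (intro allI grad_phi_coord_shift_exists) auto
  then obtain w where w: "\<And>i. 0 < w i" "\<And>i. grad_phi_coord \<alpha> (w i) = grad_phi_coord \<alpha> (x i) - \<eta> * lt i"
    by metis
  note excess = mirror_step_excess[of \<alpha> w x \<eta> lt, OF w(2)]
  have w_pos: "w \<in> pos_orthant"
    using w(1) unfolding pos_orthant_def by simp
  have "next_state \<alpha> \<eta> lam \<epsilon> z j l = w"
    unfolding next_state_def Let_def x_def[symmetric] lt_def[symmetric]
  proof (rule some_equality)
    show "w \<in> pos_orthant \<and>
        (\<forall>y\<in>pos_orthant. \<eta> * inner_k lt w + bregman \<alpha> w x \<le> \<eta> * inner_k lt y + bregman \<alpha> y x)"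
    proof (intro conjI ballI w_pos)
      fix y :: "'k \<Rightarrow> real" assume "y \<in> pos_orthant"
      then have "0 \<le> bregman \<alpha> y w"
        using assms(1) w(1) unfolding pos_orthant_def by (intro bregman_nonneg) auto
      then show "\<eta> * inner_k lt w + bregman \<alpha> w x \<le> \<eta> * inner_k lt y + bregman \<alpha> y x"
        using excess[of y] by linarith
    qed
  next
    fix z' assume z': "z' \<in> pos_orthant \<and>
        (\<forall>y\<in>pos_orthant. \<eta> * inner_k lt z' + bregman \<alpha> z' x \<le> \<eta> * inner_k lt y + bregman \<alpha> y x)"
    show "z' = w"
    proof (rule ccontr)
      assume "z' \<noteq> w"
      then have "0 < bregman \<alpha> z' w"
        using assms(1) w(1) z' unfolding pos_orthant_def by (intro bregman_pos) auto
      then show False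
        using bspec[OF conjunct2[OF z'] w_pos] excess[of z'] by linarith
    qed
  qed
  then show "0 < next_state \<alpha> \<eta> lam \<epsilon> z j l i"
    and "grad_phi_coord \<alpha> (next_state \<alpha> \<eta> lam \<epsilon> z j l i)
           = grad_phi_coord \<alpha> (proj \<alpha> \<epsilon> z i) - \<eta> * reg_loss \<alpha> lam \<epsilon> z j l i"
    using w unfolding x_def lt_def by simp_all
qed

lemma bregman_next_state_le:
  fixes z u :: "'k::finite \<Rightarrow> real" and j :: 'k
  assumes "\<alpha> \<le> 1" "0 < \<epsilon>" "real CARD('k) * \<epsilon> \<le> 1" "0 < \<eta>" "0 \<le> lam" "0 \<le> l"
  defines "x \<equiv> proj \<alpha> \<epsilon> z" and "lt \<equiv> reg_loss \<alpha> lam \<epsilon> z j l"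
  shows "bregman \<alpha> u (next_state \<alpha> \<eta> lam \<epsilon> z j l)
    \<le> bregman \<alpha> u x - \<eta> * (\<Sum>i\<in>UNIV. lt i * (x i - u i)) + \<eta>\<^sup>2 / 2 * (\<Sum>i\<in>UNIV. (lt i)\<^sup>2 * x i)"
proof -
  define z' where "z' = next_state \<alpha> \<eta> lam \<epsilon> z j l"
  have "bregman_coord \<alpha> (u i) (z' i)
      \<le> bregman_coord \<alpha> (u i) (x i) - \<eta> * lt i * (x i - u i) + (\<eta> * lt i)\<^sup>2 * x i / 2" for i
  proof -
    have "bregman_coord \<alpha> (u i) (z' i) = bregman_coord \<alpha> (u i) (x i) - \<eta> * lt i * (x i - u i)
        + (\<eta> * lt i * (x i - z' i) - bregman_coord \<alpha> (z' i) (x i))"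
      using bregman_coord_three_point[of \<alpha> "u i" "x i" "z' i"]
        grad_phi_coord_next_state[OF assms(1-6), of z j i]
      unfolding x_def lt_def z'_def by (simp add: algebra_simps)
    moreover have "\<eta> * lt i * (x i - z' i) - bregman_coord \<alpha> (z' i) (x i) \<le> (\<eta> * lt i)\<^sup>2 * x i / 2"
      using assms reg_loss_nonneg[OF assms(2,3,5,6)] proj_pos[OF assms(2,3)]
        simplex_eps_le_one[OF proj_in_simplex_eps[OF assms(2,3)] assms(2)] next_state_pos[OF assms(1-6)]
      unfolding x_def lt_def z'_def by (intro linear_minus_bregman_coord_le) auto
    ultimately show ?thesis
      by simp
  qed
  then have "bregman \<alpha> u z'
      \<le> (\<Sum>i\<in>UNIV. bregman_coord \<alpha> (u i) (x i) - \<eta> * lt i * (x i - u i) + (\<eta> * lt i)\<^sup>2 * x i / 2)"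
    unfolding bregman_eq_sum by (rule sum_mono)
  also have "\<dots> = bregman \<alpha> u x - \<eta> * (\<Sum>i\<in>UNIV. lt i * (x i - u i))
      + \<eta>\<^sup>2 / 2 * (\<Sum>i\<in>UNIV. (lt i)\<^sup>2 * x i)"
    unfolding bregman_eq_sum
    by (simp add: sum.distrib sum_subtractf sum_distrib_left power_mult_distrib sum_divide_distrib
        mult.assoc mult.commute mult.left_commute)
  finally show ?thesis
    unfolding z'_def .
qed

lemma reg_loss_inner_ge:
  fixes z u :: "'k::finite \<Rightarrow> real" and j :: 'k and \<alpha> l :: real
  assumes "0 < \<epsilon>" "real CARD('k) * \<epsilon> \<le> 1" "0 \<le> lam" "u \<in> simplex_eps \<epsilon>"
  defines "x \<equiv> proj \<alpha> \<epsilon> z" and "lt \<equiv> reg_loss \<alpha> lam \<epsilon> z j l"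
  shows "l - u j * l / x j - lam * real CARD('k) \<le> (\<Sum>i\<in>UNIV. lt i * (x i - u i))"
proof -
  have x: "x \<in> simplex_eps \<epsilon>" "\<And>i. 0 < x i"
    unfolding x_def using proj_in_simplex_eps proj_pos assms(1,2) by blast+
  have "(\<Sum>i\<in>UNIV. (if i = j then l / x j else 0) * (x i - u i))
      = (\<Sum>i\<in>UNIV. if i = j then l / x j * (x j - u j) else 0)"
    by (rule sum.cong) auto
  also have "\<dots> = l - u j * l / x j"
    using x(2)[of j] by (simp add: field_simps)
  finally have loss_part: "(\<Sum>i\<in>UNIV. (if i = j then l / x j else 0) * (x i - u i)) = l - u j * l / x j" .
  have "(x i - u i) / \<epsilon> - 1 \<le> grad_R \<epsilon> x i * (x i - u i)" for i
  proof -
    have "grad_R \<epsilon> x i * (x i - u i) = (x i - u i) / \<epsilon> - 1 + u i / x i"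
      unfolding grad_R_def using x(2)[of i] assms(1) by (simp add: field_simps)
    moreover have "0 \<le> u i / x i"
      using simplex_eps_pos[OF assms(4,1), of i] x(2)[of i] by simp
    ultimately show ?thesis
      by simp
  qed
  then have "(\<Sum>i\<in>UNIV. (x i - u i) / \<epsilon> - 1) \<le> (\<Sum>i\<in>UNIV. grad_R \<epsilon> x i * (x i - u i))"
    by (rule sum_mono)
  moreover have "(\<Sum>i\<in>UNIV. (x i - u i) / \<epsilon> - 1) = - real CARD('k)"
    using x(1) assms(4) unfolding simplex_eps_def by (simp add: sum_subtractf sum_divide_distrib[symmetric])
  ultimately have "- lam * real CARD('k) \<le> lam * (\<Sum>i\<in>UNIV. grad_R \<epsilon> x i * (x i - u i))"
    using assms(3) mult_left_mono by fastforce
  moreover have "(\<Sum>i\<in>UNIV. lt i * (x i - u i))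
      = (l - u j * l / x j) + lam * (\<Sum>i\<in>UNIV. grad_R \<epsilon> x i * (x i - u i))"
    unfolding lt_def reg_loss_eq x_def[symmetric] loss_part[symmetric]
    by (simp add: distrib_right sum.distrib sum_distrib_left mult.assoc)
  ultimately show ?thesis
    by linarith
qed

lemma reg_loss_local_norm_le:
  fixes z :: "'k::finite \<Rightarrow> real" and j :: 'k and \<alpha> :: real
  assumes "0 < \<epsilon>" "real CARD('k) * \<epsilon> \<le> 1" "0 \<le> lam" "0 \<le> l" "l \<le> 1"
  defines "x \<equiv> proj \<alpha> \<epsilon> z" and "lt \<equiv> reg_loss \<alpha> lam \<epsilon> z j l"
  shows "(\<Sum>i\<in>UNIV. (lt i)\<^sup>2 * x i) \<le> 2 * (l / x j) + 2 * real CARD('k) * lam\<^sup>2 / \<epsilon>\<^sup>2"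
proof -
  have x: "x \<in> simplex_eps \<epsilon>" "\<And>i. 0 < x i" "\<And>i. x i \<le> 1"
    unfolding x_def using proj_in_simplex_eps proj_pos simplex_eps_le_one assms(1,2) by blast+
  define p where "p i = (if i = j then l / x j else 0)" for i
  have "(lt i)\<^sup>2 * x i \<le> 2 * ((p i)\<^sup>2 * x i) + 2 * lam\<^sup>2 / \<epsilon>\<^sup>2" for i
  proof -
    have g: "0 \<le> grad_R \<epsilon> x i" "grad_R \<epsilon> x i \<le> 1 / \<epsilon>"
      using x(1) assms(1) unfolding simplex_eps_def by (intro grad_R_bounds; simp)+
    have "(lt i)\<^sup>2 \<le> 2 * (p i)\<^sup>2 + 2 * (lam * grad_R \<epsilon> x i)\<^sup>2"
      unfolding lt_def reg_loss_eq x_def[symmetric] p_def[symmetric]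
      using sum_squares_bound[of "p i" "lam * grad_R \<epsilon> x i"] by (simp add: power2_eq_square algebra_simps)
    then have "(lt i)\<^sup>2 * x i \<le> 2 * ((p i)\<^sup>2 * x i) + 2 * ((lam * grad_R \<epsilon> x i)\<^sup>2 * x i)"
      using x(2)[of i] mult_right_mono[of _ _ "x i"] by (fastforce simp: algebra_simps)
    also have "(lam * grad_R \<epsilon> x i)\<^sup>2 * x i \<le> (lam * grad_R \<epsilon> x i)\<^sup>2"
      using x(3)[of i] by (simp add: mult_left_le)
    also have "(lam * grad_R \<epsilon> x i)\<^sup>2 \<le> (lam * (1 / \<epsilon>))\<^sup>2"
      using g assms(3) by (intro power_mono mult_left_mono) auto
    finally show ?thesis
      by (simp add: power_divide)
  qed
  then have "(\<Sum>i\<in>UNIV. (lt i)\<^sup>2 * x i) \<le> (\<Sum>i\<in>UNIV. 2 * ((p i)\<^sup>2 * x i) + 2 * lam\<^sup>2 / \<epsilon>\<^sup>2)"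
    by (rule sum_mono)
  also have "\<dots> = 2 * (l / x j)\<^sup>2 * x j + 2 * real CARD('k) * lam\<^sup>2 / \<epsilon>\<^sup>2"
    unfolding p_def by (simp add: sum.distrib sum_distrib_left[symmetric] if_distrib[of "\<lambda>v. v\<^sup>2 * _"]
      cong: if_cong)
  also have "\<dots> \<le> 2 * (l / x j) + 2 * real CARD('k) * lam\<^sup>2 / \<epsilon>\<^sup>2"
    using assms(4,5) x(2)[of j] by (simp add: power2_eq_square field_simps mult_left_le_one_le)
  finally show ?thesis .
qed

lemma mirror_descent_step:
  fixes z u :: "'k::finite \<Rightarrow> real" and j :: 'k
  assumes "\<alpha> \<le> 1" "0 < \<epsilon>" "real CARD('k) * \<epsilon> \<le> 1" "0 < \<eta>" "0 \<le> lam"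
    and "u \<in> simplex_eps \<epsilon>" "0 \<le> l" "l \<le> 1"
  defines "x \<equiv> proj \<alpha> \<epsilon> z"
  shows "l + bregman \<alpha> u (proj \<alpha> \<epsilon> (next_state \<alpha> \<eta> lam \<epsilon> z j l)) / \<eta>
    \<le> bregman \<alpha> u x / \<eta> + (u j + \<eta>) * l / x j + lam * real CARD('k)
      + \<eta> * real CARD('k) * lam\<^sup>2 / \<epsilon>\<^sup>2"
proof -
  define K where "K = real CARD('k)"
  define lt where "lt = reg_loss \<alpha> lam \<epsilon> z j l"
  define z' where "z' = next_state \<alpha> \<eta> lam \<epsilon> z j l"
  have "bregman \<alpha> u (proj \<alpha> \<epsilon> z') \<le> bregman \<alpha> u z'"
    unfolding z'_def using assms next_state_pos[OF assms(1-5,7)] by (intro bregman_proj_le) auto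
  also have "\<dots> \<le> bregman \<alpha> u x - \<eta> * (\<Sum>i\<in>UNIV. lt i * (x i - u i))
      + \<eta>\<^sup>2 / 2 * (\<Sum>i\<in>UNIV. (lt i)\<^sup>2 * x i)"
    unfolding z'_def x_def lt_def by (rule bregman_next_state_le[OF assms(1-5,7)])
  also have "\<dots> \<le> bregman \<alpha> u x - \<eta> * (l - u j * l / x j - lam * K)
      + \<eta>\<^sup>2 / 2 * (2 * (l / x j) + 2 * K * lam\<^sup>2 / \<epsilon>\<^sup>2)"
  proof -
    have "\<eta> * (l - u j * l / x j - lam * K) \<le> \<eta> * (\<Sum>i\<in>UNIV. lt i * (x i - u i))"
      using reg_loss_inner_ge[OF assms(2,3,5,6)] assms(4)
      unfolding x_def lt_def K_def by (intro mult_left_mono) auto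
    moreover have "\<eta>\<^sup>2 / 2 * (\<Sum>i\<in>UNIV. (lt i)\<^sup>2 * x i) \<le> \<eta>\<^sup>2 / 2 * (2 * (l / x j) + 2 * K * lam\<^sup>2 / \<epsilon>\<^sup>2)"
      using reg_loss_local_norm_le[OF assms(2,3,5,7,8)]
      unfolding x_def lt_def K_def by (intro mult_left_mono) auto
    ultimately show ?thesis
      by linarith
  qed
  also have "\<dots> = \<eta> * (bregman \<alpha> u x / \<eta> - l + (u j + \<eta>) * l / x j + lam * K + \<eta> * K * lam\<^sup>2 / \<epsilon>\<^sup>2)"
    using assms(4) proj_pos[OF assms(2,3), of \<alpha> z j] unfolding x_def by (simp add: field_simps power2_eq_square)
  finally have "bregman \<alpha> u (proj \<alpha> \<epsilon> z') / \<eta>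
      \<le> bregman \<alpha> u x / \<eta> - l + (u j + \<eta>) * l / x j + lam * K + \<eta> * K * lam\<^sup>2 / \<epsilon>\<^sup>2"
    using assms(4) by (simp add: pos_divide_le_eq mult.commute)
  then show ?thesis
    unfolding z'_def K_def by linarith
qed

section \<open>Expected cumulative loss\<close>

lemma
  fixes M :: "real measure"
  assumes "prob_space M" "sets M = sets borel" "AE l in M. l \<in> {0..1}"
  shows bounded_loss_mean_nonneg: "0 \<le> (\<integral>l. l \<partial>M)"
    and bounded_loss_mean_le_one: "(\<integral>l. l \<partial>M) \<le> 1"
    and nn_integral_affine_bounded_loss:
      "0 \<le> A \<Longrightarrow> 0 \<le> B \<Longrightarrow> (\<integral>\<^sup>+ l. ennreal (A + B * l) \<partial>M) = ennreal (A + B * (\<integral>l. l \<partial>M))"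
proof -
  interpret prob_space M
    by (rule assms(1))
  have "(\<lambda>l. l) \<in> borel_measurable M"
    by (rule measurable_ident_sets[OF assms(2)])
  then have int: "integrable M (\<lambda>l. l)"
    using assms(3) by (intro integrable_const_bound[where B = 1]) auto
  show "0 \<le> (\<integral>l. l \<partial>M)"
    using assms(3) by (intro integral_nonneg_AE) auto
  have "(\<integral>l. l \<partial>M) \<le> (\<integral>l. 1 \<partial>M)"
    using int assms(3) by (intro integral_mono_AE) auto
  then show "(\<integral>l. l \<partial>M) \<le> 1"
    by (simp add: prob_space)
  assume "0 \<le> A" "0 \<le> B"
  then have "(\<integral>\<^sup>+ l. ennreal (A + B * l) \<partial>M) = ennreal (\<integral>l. A + B * l \<partial>M)"
    using int assms(3) by (intro nn_integral_eq_integral) auto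
  also have "(\<integral>l. A + B * l \<partial>M) = A + B * (\<integral>l. l \<partial>M)"
    using int by (simp add: prob_space)
  finally show "(\<integral>\<^sup>+ l. ennreal (A + B * l) \<partial>M) = ennreal (A + B * (\<integral>l. l \<partial>M))" .
qed

lemma nn_integral_round_le:
  fixes M :: "real measure" and F :: "('k::finite \<Rightarrow> real) \<Rightarrow> ennreal"
    and z u :: "'k \<Rightarrow> real" and j :: 'k
  assumes M: "prob_space M" "sets M = sets borel" "AE l in M. l \<in> {0..1}"
    and params: "\<alpha> \<le> 1" "0 < \<epsilon>" "real CARD('k) * \<epsilon> \<le> 1" "0 < \<eta>" "0 \<le> lam"
    and u: "u \<in> simplex_eps \<epsilon>"
    and F: "0 \<le> C" "\<And>z'. F z' \<le> ennreal (C + bregman \<alpha> u (proj \<alpha> \<epsilon> z') / \<eta>)"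
  defines "x \<equiv> proj \<alpha> \<epsilon> z" and "K \<equiv> real CARD('k)"
  shows "(\<integral>\<^sup>+ l. ennreal l + F (next_state \<alpha> \<eta> lam \<epsilon> z j l) \<partial>M)
    \<le> ennreal (C + bregman \<alpha> u x / \<eta> + lam * K + \<eta> * K * lam\<^sup>2 / \<epsilon>\<^sup>2 + (u j + \<eta>) / x j * (\<integral>l. l \<partial>M))"
proof -
  define A where "A = C + bregman \<alpha> u x / \<eta> + lam * K + \<eta> * K * lam\<^sup>2 / \<epsilon>\<^sup>2"
  define B where "B = (u j + \<eta>) / x j"
  have u_pos: "\<And>i. 0 < u i"
    using simplex_eps_pos[OF u params(2)] .
  have breg_nonneg: "0 \<le> bregman \<alpha> u (proj \<alpha> \<epsilon> y) / \<eta>" for y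
    using params u_pos proj_pos[OF params(2,3)] by (intro divide_nonneg_pos bregman_nonneg) auto
  have "0 \<le> A" "0 \<le> B"
    unfolding A_def B_def x_def K_def
    using F(1) params u_pos[of j] breg_nonneg[of z] proj_pos[OF params(2,3), of \<alpha> z j] by simp_all
  have "(\<integral>\<^sup>+ l. ennreal l + F (next_state \<alpha> \<eta> lam \<epsilon> z j l) \<partial>M) \<le> (\<integral>\<^sup>+ l. ennreal (A + B * l) \<partial>M)"
    using M(3)
  proof (intro nn_integral_mono_AE, eventually_elim)
    case (elim l)
    define z' where "z' = next_state \<alpha> \<eta> lam \<epsilon> z j l"
    have "ennreal l + F z' \<le> ennreal l + ennreal (C + bregman \<alpha> u (proj \<alpha> \<epsilon> z') / \<eta>)"
      using F(2) by (rule add_left_mono)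
    also have "\<dots> = ennreal (l + (C + bregman \<alpha> u (proj \<alpha> \<epsilon> z') / \<eta>))"
      using elim F(1) breg_nonneg by (subst ennreal_plus) auto
    also have "\<dots> \<le> ennreal (A + B * l)"
      using mirror_descent_step[OF params u, of l z j] elim
      unfolding A_def B_def K_def z'_def x_def by (intro ennreal_leI) (auto simp: field_simps)
    finally show ?case
      unfolding z'_def .
  qed
  also have "\<dots> = ennreal (A + B * (\<integral>l. l \<partial>M))"
    using nn_integral_affine_bounded_loss[OF M \<open>0 \<le> A\<close> \<open>0 \<le> B\<close>] .
  finally show ?thesis
    unfolding A_def B_def .
qed

lemma exp_loss_le:
  fixes P :: "'k::finite \<Rightarrow> real measure" and u :: "'k \<Rightarrow> real"
  assumes P: "\<And>a. prob_space (P a)" "\<And>a. sets (P a) = sets borel" "\<And>a. AE l in P a. l \<in> {0..1}"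
    and params: "\<alpha> \<le> 1" "0 < \<epsilon>" "real CARD('k) * \<epsilon> \<le> 1" "0 < \<eta>" "0 \<le> lam"
    and u: "u \<in> simplex_eps \<epsilon>"
  defines "c \<equiv> (\<Sum>j\<in>UNIV. u j * (\<integral>l. l \<partial>P j)) + \<eta> * real CARD('k) + lam * real CARD('k)
     + \<eta> * real CARD('k) * lam\<^sup>2 / \<epsilon>\<^sup>2"
  shows "exp_loss P \<alpha> \<eta> lam \<epsilon> n z \<le> ennreal (real n * c + bregman \<alpha> u (proj \<alpha> \<epsilon> z) / \<eta>)"
proof (induction n arbitrary: z)
  case 0
  then show ?case
    by simp
next
  case (Suc n)
  define K where "K = real CARD('k)"
  define \<mu> where "\<mu> j = (\<integral>l. l \<partial>P j)" for j
  define x where "x = proj \<alpha> \<epsilon> z"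
  define A where "A = real n * c + bregman \<alpha> u x / \<eta> + lam * K + \<eta> * K * lam\<^sup>2 / \<epsilon>\<^sup>2"
  have x: "x \<in> simplex_eps \<epsilon>" "\<And>i. 0 < x i"
    unfolding x_def using proj_in_simplex_eps proj_pos params(2,3) by blast+
  have \<mu>: "0 \<le> \<mu> j" "\<mu> j \<le> 1" for j
    unfolding \<mu>_def using bounded_loss_mean_nonneg bounded_loss_mean_le_one P by blast+
  have "0 \<le> c"
    unfolding c_def using params simplex_eps_pos[OF u params(2)] \<mu>(1)[unfolded \<mu>_def]
    by (intro add_nonneg_nonneg sum_nonneg mult_nonneg_nonneg) (auto intro: less_imp_le)
  then have round: "(\<integral>\<^sup>+ l. ennreal l + exp_loss P \<alpha> \<eta> lam \<epsilon> n (next_state \<alpha> \<eta> lam \<epsilon> z j l) \<partial>P j)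
      \<le> ennreal (A + (u j + \<eta>) / x j * \<mu> j)" for j
    unfolding A_def K_def x_def \<mu>_def
    using nn_integral_round_le[OF P params u _ Suc.IH] by simp
  have "0 \<le> bregman \<alpha> u x"
    using params(1) simplex_eps_pos[OF u params(2)] x(2) by (intro bregman_nonneg) auto
  then have nonneg: "0 \<le> x j * (A + (u j + \<eta>) / x j * \<mu> j)" for j
    unfolding A_def K_def using \<open>0 \<le> c\<close> params x(2)[of j] simplex_eps_pos[OF u params(2), of j] \<mu>(1)[of j]
    by simp
  have "exp_loss P \<alpha> \<eta> lam \<epsilon> (Suc n) z \<le> (\<Sum>j\<in>UNIV. ennreal (x j) * ennreal (A + (u j + \<eta>) / x j * \<mu> j))"
    unfolding exp_loss.simps x_def[symmetric] by (intro sum_mono mult_left_mono round) auto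
  also have "\<dots> = ennreal (\<Sum>j\<in>UNIV. x j * (A + (u j + \<eta>) / x j * \<mu> j))"
    using x(2) nonneg by (simp add: ennreal_mult'[symmetric] less_imp_le sum_ennreal)
  also have "\<dots> \<le> ennreal (real (Suc n) * c + bregman \<alpha> u x / \<eta>)"
  proof (rule ennreal_leI)
    have "x j * (A + (u j + \<eta>) / x j * \<mu> j) = A * x j + u j * \<mu> j + \<eta> * \<mu> j" for j
      using x(2)[of j] by (simp add: field_simps)
    moreover have "(\<Sum>j\<in>UNIV. x j) = 1"
      using x(1) unfolding simplex_eps_def by blast
    ultimately have "(\<Sum>j\<in>UNIV. x j * (A + (u j + \<eta>) / x j * \<mu> j))
        = A + (\<Sum>j\<in>UNIV. u j * \<mu> j) + \<eta> * (\<Sum>j\<in>UNIV. \<mu> j)"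
      by (simp add: sum.distrib sum_distrib_left[symmetric])
    moreover have "\<eta> * (\<Sum>j\<in>UNIV. \<mu> j) \<le> \<eta> * K"
      unfolding K_def using \<mu>(2) params(4) sum_mono[of UNIV \<mu> "\<lambda>_. 1"] by simp
    moreover have "c = (\<Sum>j\<in>UNIV. u j * \<mu> j) + \<eta> * K + lam * K + \<eta> * K * lam\<^sup>2 / \<epsilon>\<^sup>2"
      unfolding c_def \<mu>_def K_def ..
    moreover have "real (Suc n) * c = real n * c + c"
      by (simp add: algebra_simps)
    ultimately show "(\<Sum>j\<in>UNIV. x j * (A + (u j + \<eta>) / x j * \<mu> j)) \<le> real (Suc n) * c + bregman \<alpha> u x / \<eta>"
      unfolding A_def by linarith
  qed
  finally show ?case
    unfolding x_def .
qed

section \<open>Tuning the parameters\<close>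

definition phi_coord_bound :: "real \<Rightarrow> real" where
  "phi_coord_bound \<alpha> = (if \<alpha> = 0 then 0 else if \<alpha> = 1 then 1 else 1 / (\<alpha> * (1 - \<alpha>)))"

lemma phi_coord_le_bound:
  assumes "0 \<le> \<alpha>" "\<alpha> \<le> 1" "0 < \<epsilon>" "\<epsilon> \<le> t" "t \<le> 1"
  shows "phi_coord \<alpha> t \<le> phi_coord_bound \<alpha> - (if \<alpha> = 0 then ln \<epsilon> else 0)"
proof -
  consider "\<alpha> = 0" | "\<alpha> = 1" | "0 < \<alpha>" "\<alpha> < 1"
    using assms(1,2) by linarith
  then show ?thesis
  proof cases
    case 1
    have "ln \<epsilon> \<le> ln t"
      using assms by simp
    moreover have "phi_coord \<alpha> t = t - 1 - ln t"
      using 1 by (simp add: phi_coord_def)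
    moreover have "phi_coord_bound \<alpha> - (if \<alpha> = 0 then ln \<epsilon> else 0) = - ln \<epsilon>"
      using 1 by (simp add: phi_coord_bound_def)
    ultimately show ?thesis
      using assms(5) by linarith
  next
    case 2
    have "ln t \<le> 1"
      using ln_le_minus_one[of t] assms by linarith
    with 2 show ?thesis
      using assms unfolding phi_coord_def phi_coord_bound_def by simp
  next
    case 3
    have "- (t powr \<alpha> - \<alpha> * t - (1 - \<alpha>)) \<le> 1"
      using assms 3 mult_left_le[of t \<alpha>] powr_ge_zero[of t \<alpha>] by linarith
    then have "- (t powr \<alpha> - \<alpha> * t - (1 - \<alpha>)) / (\<alpha> * (1 - \<alpha>)) \<le> 1 / (\<alpha> * (1 - \<alpha>))"
      using 3 by (intro divide_right_mono) auto
    with 3 show ?thesis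
      unfolding phi_coord_def phi_coord_bound_def by (simp only: minus_divide_left) simp
  qed
qed

lemma bregman_uniform_le:
  fixes u :: "'k::finite \<Rightarrow> real"
  assumes "0 \<le> \<alpha>" "\<alpha> \<le> 1" "0 < \<epsilon>" "u \<in> simplex_eps \<epsilon>"
  defines "K \<equiv> real CARD('k)"
  shows "bregman \<alpha> u (\<lambda>_. 1 / K)
    \<le> K * (phi_coord_bound \<alpha> - phi_coord \<alpha> (1 / K)) - (if \<alpha> = 0 then K * ln \<epsilon> else 0)"
proof -
  have "(\<Sum>i\<in>UNIV. u i - 1 / K) = 0"
    using assms(4) unfolding simplex_eps_def K_def by (simp add: sum_subtractf)
  then have "bregman \<alpha> u (\<lambda>_. 1 / K) = (\<Sum>i\<in>UNIV. phi_coord \<alpha> (u i)) - K * phi_coord \<alpha> (1 / K)"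
    unfolding bregman_eq_sum bregman_coord_def K_def
    by (simp add: sum_subtractf sum_distrib_left[symmetric])
  also have "(\<Sum>i\<in>UNIV. phi_coord \<alpha> (u i))
      \<le> (\<Sum>i\<in>(UNIV :: 'k set). phi_coord_bound \<alpha> - (if \<alpha> = 0 then ln \<epsilon> else 0))"
    using assms(4) simplex_eps_le_one[OF assms(4,3)] unfolding simplex_eps_def
    by (intro sum_mono phi_coord_le_bound[OF assms(1-3)]) auto
  finally show ?thesis
    unfolding K_def by (cases "\<alpha> = 0") (simp_all add: algebra_simps)
qed

lemma bregman_uniform_le_horizon:
  fixes u :: "'k::finite \<Rightarrow> real" and T :: nat
  assumes "0 \<le> \<alpha>" "\<alpha> \<le> 1" "2 \<le> ln (real T)"
    and "1 + phi_coord_bound \<alpha> - phi_coord \<alpha> (1 / real CARD('k)) \<le> ln (real T)"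
    and "u \<in> simplex_eps (ln (real T) / sqrt (real T))"
  defines "K \<equiv> real CARD('k)"
  shows "bregman \<alpha> u (\<lambda>_. 1 / K) \<le> K * ln (real T) - K + (if \<alpha> = 0 then K * ln (real T) / 2 else 0)"
proof -
  have T: "0 < real T"
    using assms(3) by (auto intro: ccontr)
  have "- ln (ln (real T) / sqrt (real T)) \<le> ln (real T) / 2"
    using assms(3) T by (simp add: ln_div ln_sqrt)
  then have "- (K * ln (ln (real T) / sqrt (real T))) \<le> K * ln (real T) / 2"
    using mult_left_mono[of "- ln (ln (real T) / sqrt (real T))" "ln (real T) / 2" K] by (simp add: K_def)
  moreover have "K * (phi_coord_bound \<alpha> - phi_coord \<alpha> (1 / K)) \<le> K * (ln (real T) - 1)"
    using assms(4) unfolding K_def by (intro mult_left_mono) auto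
  moreover have "0 < ln (real T) / sqrt (real T)"
    using assms(3) T by (intro divide_pos_pos) (linarith, simp)
  ultimately show ?thesis
    using bregman_uniform_le[OF assms(1,2) _ assms(5)] unfolding K_def[symmetric]
    by (cases "\<alpha> = 0") (simp_all add: algebra_simps)
qed

definition comparator :: "real \<Rightarrow> 'k::finite \<Rightarrow> 'k \<Rightarrow> real" where
  "comparator \<epsilon> a i = \<epsilon> + (if i = a then 1 - real CARD('k) * \<epsilon> else 0)"

lemma comparator_in_simplex_eps:
  assumes "real CARD('k::finite) * \<epsilon> \<le> 1"
  shows "comparator \<epsilon> (a :: 'k) \<in> simplex_eps \<epsilon>"
  using assms unfolding simplex_eps_def comparator_def by (simp add: sum.distrib)

lemma sum_comparator_mult_le:
  fixes \<mu> :: "'k::finite \<Rightarrow> real"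
  assumes "0 \<le> \<epsilon>" "\<And>j. 0 \<le> \<mu> j" "\<And>j. \<mu> j \<le> 1"
  shows "(\<Sum>j\<in>UNIV. comparator \<epsilon> a j * \<mu> j) \<le> \<mu> a + real CARD('k) * \<epsilon>"
proof -
  have "(\<Sum>j\<in>UNIV. comparator \<epsilon> a j * \<mu> j) = \<epsilon> * (\<Sum>j\<in>UNIV. \<mu> j) + (1 - real CARD('k) * \<epsilon>) * \<mu> a"
    unfolding comparator_def
    by (simp add: distrib_right sum.distrib sum_distrib_left if_distrib[of "\<lambda>v. v * _"] cong: if_cong)
  moreover have "(\<Sum>j\<in>UNIV. \<mu> j) \<le> real CARD('k)"
    using sum_mono[of UNIV \<mu> "\<lambda>_. 1"] assms(3) by simp
  moreover have "0 \<le> real CARD('k) * \<epsilon> * \<mu> a"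
    using assms by simp
  ultimately show ?thesis
    using assms(1) mult_left_mono[of "(\<Sum>j\<in>UNIV. \<mu> j)" "real CARD('k)" \<epsilon>]
    by (simp add: algebra_simps)
qed

lemma exp3_expected_loss_le_comparator:
  fixes P :: "'k::finite \<Rightarrow> real measure" and u :: "'k \<Rightarrow> real"
  assumes P: "\<And>a. prob_space (P a)" "\<And>a. sets (P a) = sets borel" "\<And>a. AE l in P a. l \<in> {0..1}"
    and params: "\<alpha> \<le> 1" "0 < \<epsilon>" "real CARD('k) * \<epsilon> \<le> 1" "0 < \<eta>" "0 \<le> lam"
    and u: "u \<in> simplex_eps \<epsilon>"
  defines "K \<equiv> real CARD('k)"
  shows "exp3_expected_loss P \<alpha> T \<eta> lam \<epsilon>
    \<le> ennreal (real T * ((\<Sum>j\<in>UNIV. u j * (\<integral>l. l \<partial>P j)) + \<eta> * K + lam * K + \<eta> * K * lam\<^sup>2 / \<epsilon>\<^sup>2)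
      + bregman \<alpha> u (\<lambda>_. 1 / K) / \<eta>)"
proof -
  have "bregman \<alpha> u (proj \<alpha> \<epsilon> (\<lambda>_. 1 / K)) \<le> bregman \<alpha> u (\<lambda>_. 1 / K)"
    using params(1) unfolding K_def by (intro bregman_proj_le[OF _ params(2,3) u]) auto
  then have "bregman \<alpha> u (proj \<alpha> \<epsilon> (\<lambda>_. 1 / K)) / \<eta> \<le> bregman \<alpha> u (\<lambda>_. 1 / K) / \<eta>"
    using params(4) by (simp add: divide_right_mono)
  then show ?thesis
    using exp_loss_le[OF P params u, where n = T and z = "\<lambda>_. 1 / K"]
    unfolding exp3_expected_loss_def K_def by (meson add_left_mono ennreal_leI order_trans)
qed

lemma tuned_round_cost_le:
  fixes K T L g m S :: real
  assumes "1 \<le> K" "0 < T" "0 < L" "0 < g" "g \<le> L\<^sup>2" "S \<le> m + K * (L / sqrt T)"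
  defines "\<eta> \<equiv> 1 / sqrt T" and "\<epsilon> \<equiv> L / sqrt T" and "lam \<equiv> g / sqrt (K * T)"
  shows "T * (S + \<eta> * K + lam * K + \<eta> * K * lam\<^sup>2 / \<epsilon>\<^sup>2)
    \<le> T * m + K * L * sqrt T + K * sqrt T + g * sqrt K * sqrt T + sqrt T * g"
proof -
  define s where "s = sqrt T"
  define q where "q = sqrt K"
  have s: "0 < s" "s * s = T"
    unfolding s_def using assms(2) by simp_all
  have q: "1 \<le> q" "q * q = K"
    unfolding q_def using assms(1) by simp_all
  have lam: "lam = g / (q * s)"
    unfolding lam_def q_def s_def by (simp add: real_sqrt_mult)
  have "T * S \<le> T * (m + K * (L / s))"
    using mult_left_mono[OF assms(6), of T] assms(2) unfolding s_def by simp
  also have "\<dots> = T * m + K * L * s"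
    unfolding s(2)[symmetric] using s(1) by (simp add: field_simps)
  finally have "T * S \<le> T * m + K * L * s" .
  moreover have "T * (\<eta> * K) = K * s"
    unfolding \<eta>_def s_def[symmetric] s(2)[symmetric] using s(1) by simp
  moreover have "T * (lam * K) = g * q * s"
    unfolding lam s(2)[symmetric] q(2)[symmetric] using s(1) q(1) by (simp add: field_simps)
  moreover have "T * (\<eta> * K * lam\<^sup>2 / \<epsilon>\<^sup>2) = s * (g * (g / L\<^sup>2))"
    unfolding lam \<eta>_def \<epsilon>_def s_def[symmetric] s(2)[symmetric] q(2)[symmetric] using s(1) q assms(1,3)
    by (simp add: field_simps power2_eq_square)
  moreover have "g / L\<^sup>2 \<le> 1"
    using assms(3-5) by simp
  then have "s * (g * (g / L\<^sup>2)) \<le> s * g"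
    using s(1) assms(4) by (intro mult_left_mono mult_left_le) auto
  moreover have "T * (S + \<eta> * K + lam * K + \<eta> * K * lam\<^sup>2 / \<epsilon>\<^sup>2)
      = T * S + T * (\<eta> * K) + T * (lam * K) + T * (\<eta> * K * lam\<^sup>2 / \<epsilon>\<^sup>2)"
    by (simp add: distrib_left)
  ultimately show ?thesis
    unfolding s_def[symmetric] q_def[symmetric] by linarith
qed

lemma tuned_total_le:
  fixes \<alpha> K T L g m C D :: real
  assumes "1 \<le> K" "0 < T" "2 \<le> L" "0 < g"
    and "C \<le> T * m + K * L * sqrt T + K * sqrt T + g * sqrt K * sqrt T + sqrt T * g"
    and "D \<le> K * L - K + (if \<alpha> = 0 then K * L / 2 else 0)"
  shows "C + sqrt T * D \<le> T * m +
    (if \<alpha> < 1/3 then (4 * sqrt K * L + g * L) * sqrt (K * T)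
     else (4 * sqrt K * ln K + 2 * sqrt K * L + g * L) * sqrt (K * T))"
proof -
  define s where "s = sqrt T"
  define q where "q = sqrt K"
  have s: "0 < s" and q: "1 \<le> q" "q * (q * x) = K * x" for x
    unfolding s_def q_def using assms(1,2) by (simp_all add: mult.assoc[symmetric])
  have g_terms: "s * g \<le> g * q * s" "2 * (g * q * s) \<le> g * L * q * s"
    using s assms(3,4) q(1) by (simp_all add: mult_le_cancel_left1 mult_right_mono)
  have KLs: "0 \<le> K * L * s" "0 \<le> K * ln K * s"
    using s assms(1,3) by simp_all
  have "s * D \<le> s * (K * L - K + (if \<alpha> = 0 then K * L / 2 else 0))"
    using assms(6) s by (intro mult_left_mono) auto
  also have "\<dots> = K * L * s - K * s + (if \<alpha> = 0 then K * L * s / 2 else 0)"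
    by (simp add: algebra_simps)
  also have "\<dots> \<le> K * L * s - K * s + (if \<alpha> < 1/3 then K * L * s / 2 else 0)"
    using KLs by auto
  finally have D: "s * D \<le> K * L * s - K * s + (if \<alpha> < 1/3 then K * L * s / 2 else 0)" .
  have "sqrt (K * T) = q * s"
    unfolding q_def s_def by (simp add: real_sqrt_mult)
  then have B: "(4 * sqrt K * L + g * L) * sqrt (K * T) = 4 * (K * L * s) + g * L * q * s"
    "(4 * sqrt K * ln K + 2 * sqrt K * L + g * L) * sqrt (K * T)
      = 4 * (K * ln K * s) + 2 * (K * L * s) + g * L * q * s"
    unfolding q_def[symmetric] by (simp_all add: algebra_simps q(2))
  show ?thesis
  proof (cases "\<alpha> < 1/3")
    case True
    show ?thesis
      using assms(5) g_terms KLs D[unfolded if_P[OF True]] B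
      unfolding if_P[OF True] s_def[symmetric] q_def[symmetric] by linarith
  next
    case False
    show ?thesis
      using assms(5) g_terms KLs D[unfolded if_not_P[OF False]] B
      unfolding if_not_P[OF False] s_def[symmetric] q_def[symmetric] by linarith
  qed
qed

lemma exp3_expected_loss_le_horizon:
  fixes P :: "'k::finite \<Rightarrow> real measure" and T :: nat and \<alpha> g :: real
  assumes P: "\<And>a. prob_space (P a)" "\<And>a. sets (P a) = sets borel" "\<And>a. AE l in P a. l \<in> {0..1}"
    and \<alpha>: "0 \<le> \<alpha>" "\<alpha> \<le> 1"
    and g: "0 < g" "g \<le> (ln (real T))\<^sup>2"
    and T: "2 \<le> ln (real T)" "real CARD('k) * (ln (real T) / sqrt (real T)) \<le> 1"
      "1 + phi_coord_bound \<alpha> - phi_coord \<alpha> (1 / real CARD('k)) \<le> ln (real T)"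
  defines "K \<equiv> real CARD('k)"
  shows "exp3_expected_loss P \<alpha> T (1 / sqrt (real T)) (g / sqrt (K * real T)) (ln (real T) / sqrt (real T))
    \<le> ennreal (real T * Min (range (\<lambda>a. \<integral>l. l \<partial>P a)) +
          (if \<alpha> < 1/3
           then (4 * sqrt K * ln (real T) + g * ln (real T)) * sqrt (K * real T)
           else (4 * sqrt K * ln K + 2 * sqrt K * ln (real T) + g * ln (real T)) * sqrt (K * real T)))"
proof -
  define L where "L = ln (real T)"
  define \<epsilon> where "\<epsilon> = L / sqrt (real T)"
  define \<mu> where "\<mu> a = (\<integral>l. l \<partial>P a)" for a
  have K: "1 \<le> K"
    unfolding K_def by simp
  have T_pos: "0 < real T"
    using T(1) by (auto intro: ccontr)
  have "0 < L"
    using T(1) unfolding L_def by linarith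
  moreover have "0 < sqrt (real T)"
    using T_pos by simp
  ultimately have \<epsilon>: "0 < \<epsilon>" "K * \<epsilon> \<le> 1"
    unfolding \<epsilon>_def using T(2) by (simp_all add: K_def L_def)
  have \<mu>: "0 \<le> \<mu> a" "\<mu> a \<le> 1" for a
    unfolding \<mu>_def using bounded_loss_mean_nonneg bounded_loss_mean_le_one P by blast+
  have "Min (range \<mu>) \<in> range \<mu>"
    by (rule Min_in) auto
  then obtain a where a: "\<mu> a = Min (range \<mu>)"
    by (metis rangeE)
  define u where "u = comparator \<epsilon> a"
  have u: "u \<in> simplex_eps \<epsilon>"
    unfolding u_def using \<epsilon>(2) by (intro comparator_in_simplex_eps) (simp add: K_def)
  have D: "bregman \<alpha> u (\<lambda>_. 1 / K) \<le> K * L - K + (if \<alpha> = 0 then K * L / 2 else 0)"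
    using \<alpha> T(1,3) u unfolding K_def L_def \<epsilon>_def by (rule bregman_uniform_le_horizon)
  define \<eta> where "\<eta> = 1 / sqrt (real T)"
  define lam where "lam = g / sqrt (K * real T)"
  define S where "S = (\<Sum>j\<in>UNIV. u j * \<mu> j)"
  have "S \<le> Min (range \<mu>) + K * (L / sqrt (real T))"
    unfolding S_def u_def a[symmetric] K_def \<epsilon>_def[symmetric]
    using \<epsilon>(1) \<mu> by (intro sum_comparator_mult_le) auto
  then have "real T * (S + \<eta> * K + lam * K + \<eta> * K * lam\<^sup>2 / \<epsilon>\<^sup>2)
      \<le> real T * Min (range \<mu>) + K * L * sqrt (real T) + K * sqrt (real T)
        + g * sqrt K * sqrt (real T) + sqrt (real T) * g"
    unfolding \<eta>_def lam_def \<epsilon>_def using K T_pos \<open>0 < L\<close> g unfolding L_def[symmetric]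
    by (intro tuned_round_cost_le) auto
  from tuned_total_le[OF K T_pos _ g(1) this D] T(1)
  have "real T * (S + \<eta> * K + lam * K + \<eta> * K * lam\<^sup>2 / \<epsilon>\<^sup>2) + bregman \<alpha> u (\<lambda>_. 1 / K) / \<eta>
    \<le> real T * Min (range \<mu>) + (if \<alpha> < 1/3 then (4 * sqrt K * L + g * L) * sqrt (K * real T)
        else (4 * sqrt K * ln K + 2 * sqrt K * L + g * L) * sqrt (K * real T))"
    unfolding L_def \<eta>_def by (simp add: mult.commute)
  moreover have "exp3_expected_loss P \<alpha> T \<eta> lam \<epsilon>
    \<le> ennreal (real T * (S + \<eta> * K + lam * K + \<eta> * K * lam\<^sup>2 / \<epsilon>\<^sup>2) + bregman \<alpha> u (\<lambda>_. 1 / K) / \<eta>)"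
    unfolding S_def \<mu>_def K_def using \<epsilon> T_pos g(1) unfolding \<eta>_def lam_def K_def
    by (intro exp3_expected_loss_le_comparator[OF P \<alpha>(2) _ _ _ _ u]) auto
  ultimately show ?thesis
    unfolding \<mu>_def L_def \<epsilon>_def \<eta>_def lam_def by (meson ennreal_leI order_trans)
qed

lemma eventually_large_horizon:
  "eventually (\<lambda>T. 2 \<le> T \<and> C \<le> ln (real T) \<and> K * (ln (real T) / sqrt (real T)) \<le> 1) sequentially"
proof -
  have "filterlim (\<lambda>T. ln (real T)) at_top sequentially"
    by (rule filterlim_compose[OF ln_at_top filterlim_real_sequentially])
  then have "eventually (\<lambda>T. C \<le> ln (real T)) sequentially"
    by (simp add: filterlim_at_top)
  moreover have "((\<lambda>x::real. ln x / sqrt x) \<longlongrightarrow> 0) at_top"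
    by real_asymp
  then have "(\<lambda>T. K * (ln (real T) / sqrt (real T))) \<longlonglongrightarrow> 0"
    by (intro tendsto_mult_right_zero filterlim_compose[OF _ filterlim_real_sequentially])
  then have "eventually (\<lambda>T. K * (ln (real T) / sqrt (real T)) < 1) sequentially"
    by (rule order_tendstoD) simp
  ultimately show ?thesis
    by (auto elim: eventually_mono intro!: eventually_conj eventually_ge_at_top)
qed

theorem theorem2:
  fixes P :: "'k::finite \<Rightarrow> real measure"
    and \<alpha> :: real
    and \<gamma> :: "nat \<Rightarrow> real"
  assumes P_prob: "\<And>a. prob_space (P a)"
    and P_borel: "\<And>a. sets (P a) = sets borel"
    and P_support: "\<And>a. AE l in P a. l \<in> {0..1}"
    and alpha: "0 \<le> \<alpha>" "\<alpha> \<le> 1"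
    and gamma_pos: "\<And>T. T \<ge> 2 \<Longrightarrow> 0 < \<gamma> T"
    and gamma_le: "\<And>T. T \<ge> 2 \<Longrightarrow> \<gamma> T \<le> (ln (real T))\<^sup>2"
    and gamma_lim: "(\<lambda>T. \<gamma> T / (ln (real T))\<^sup>2) \<longlonglongrightarrow> 0"
    and gamma_lim2: "\<alpha> < 1/3 \<Longrightarrow> (\<lambda>T. ln (real T) / \<gamma> T) \<longlonglongrightarrow> 0"
  shows "\<exists>T0. \<forall>T\<ge>T0.
    (let K = real CARD('k);
         \<mu> = (\<lambda>a. \<integral>l. l \<partial>P a);
         \<mu>star = Min (range \<mu>);
         \<eta> = 1 / sqrt (real T);
         \<epsilon> = ln (real T) / sqrt (real T);
         lam = \<gamma> T / sqrt (K * real T);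
         B = (if \<alpha> < 1/3
              then (4 * sqrt K * ln (real T) + \<gamma> T * ln (real T)) * sqrt (K * real T)
              else (4 * sqrt K * ln K + 2 * sqrt K * ln (real T) + \<gamma> T * ln (real T))
                     * sqrt (K * real T))
     in exp3_expected_loss P \<alpha> T \<eta> lam \<epsilon> \<le> ennreal (real T * \<mu>star + B))"
proof -
  define C where "C = max 2 (1 + phi_coord_bound \<alpha> - phi_coord \<alpha> (1 / real CARD('k)))"
  obtain N where N: "\<And>T. N \<le> T \<Longrightarrow>
      2 \<le> T \<and> C \<le> ln (real T) \<and> real CARD('k) * (ln (real T) / sqrt (real T)) \<le> 1"
    using eventually_large_horizon unfolding eventually_sequentially by blast
  have "exp3_expected_loss P \<alpha> T (1 / sqrt (real T)) (\<gamma> T / sqrt (real CARD('k) * real T))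
      (ln (real T) / sqrt (real T))
    \<le> ennreal (real T * Min (range (\<lambda>a. \<integral>l. l \<partial>P a)) +
          (if \<alpha> < 1/3
           then (4 * sqrt (real CARD('k)) * ln (real T) + \<gamma> T * ln (real T)) * sqrt (real CARD('k) * real T)
           else (4 * sqrt (real CARD('k)) * ln (real CARD('k)) + 2 * sqrt (real CARD('k)) * ln (real T)
                  + \<gamma> T * ln (real T)) * sqrt (real CARD('k) * real T)))"
    if "N \<le> T" for T
    using N[OF that] gamma_pos gamma_le unfolding C_def
    by (intro exp3_expected_loss_le_horizon[OF P_prob P_borel P_support alpha]) auto
  then show ?thesis
    unfolding Let_def by blast
qed

end
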